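(* Let $h\geq 3$ be a constant, let $G$ be a graph on $n$ vertices, and let $s=\frac{1}{h^h}$. For any $\Lambda$ with $\Lambda=\omega(1)$: (1) for every vertex $v$ with $t_G(v)\geq \Lambda\cdot (2h\log n)^{(h-1)^2}\cdot \frac{2}{s}$, there exists a vector $P\in\mathsf{Product}_h(\Lambda)$ such that $v[P]\geq (1-1/e)^{h-1}\cdot s$; (2) for every vertex $v$ with $t_G(v)\leq \Lambda/\log n$ and every vector $P\in\mathsf{Product}_h(\Lambda)$, we have $v[P]\leq 1/\log n$.
   Context: An $h$-cycle is a cycle on $h$ distinct vertices; $t_G(v)$ is the number of $h$-cycles of $G$ containing $v$. Logarithms are base 2. $\mathsf{Product}_h(\Lambda)$ is the set of vectors $(p_1,\dots,p_h)\in[0,1]^h$ such that each $p_i\in\{2^{-j}: j \text{ an integer}, 0\leq j\leq \log(\Lambda)+1\}$ and $\prod_{i=1}^h p_i\leq 1/\Lambda$. For $P=(p_1,\dots,p_h)\in[0,1]^h$, the $P$-discovery experiment is: sample a uniformly random coloring $\varphi:V(G)\to[h]$ (each vertex independently gets a uniform color), then keep each vertex of color class $i$ independently with probability $p_i$, and let $F$ be the induced subgraph on the kept vertices; $v$ is $P$-discovered if $v$ lies on an $h$-cycle of $F$ whose $h$ vertices have $h$ distinct colors under $\varphi$. $v[P]$ denotes the probability that $v$ is $P$-discovered. *)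

theory Defs
  imports "HOL-Analysis.Analysis"
begin

definition simple_graph :: "nat \<Rightarrow> (nat \<Rightarrow> nat \<Rightarrow> bool) \<Rightarrow> bool" where
  "simple_graph n E \<longleftrightarrow> (\<forall>u v. E u v \<longrightarrow> u < n \<and> v < n \<and> u \<noteq> v) \<and> (\<forall>u v. E u v \<longrightarrow> E v u)"

definition cyc_seq :: "nat \<Rightarrow> (nat \<Rightarrow> nat \<Rightarrow> bool) \<Rightarrow> nat set \<Rightarrow> (nat \<Rightarrow> nat) \<Rightarrow> bool" where
  "cyc_seq h E S x \<longleftrightarrow> inj_on x {..<h} \<and> x ` {..<h} \<subseteq> S \<and>
     (\<forall>i<h. E (x i) (x ((i + 1) mod h)))"

definition h_cycles :: "nat \<Rightarrow> nat \<Rightarrow> (nat \<Rightarrow> nat \<Rightarrow> bool) \<Rightarrow> nat set set set" where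
  "h_cycles h n E = {C. \<exists>x. cyc_seq h E {..<n} x \<and>
       C = (\<lambda>i. {x i, x ((i + 1) mod h)}) ` {..<h}}"

definition t_count :: "nat \<Rightarrow> nat \<Rightarrow> (nat \<Rightarrow> nat \<Rightarrow> bool) \<Rightarrow> nat \<Rightarrow> nat" where
  "t_count h n E v = card {C \<in> h_cycles h n E. v \<in> \<Union>C}"

text \<open>Product_h(\<Lambda>); P i is the keep probability of colour class i, i < h.\<close>
definition Product :: "nat \<Rightarrow> real \<Rightarrow> (nat \<Rightarrow> real) set" where
  "Product h \<Lambda> = {P. (\<forall>i<h. \<exists>j::nat. real j \<le> log 2 \<Lambda> + 1 \<and> P i = (1/2) ^ j) \<and>
                      (\<Prod>i<h. P i) \<le> 1 / \<Lambda>}"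

definition discovered :: "nat \<Rightarrow> (nat \<Rightarrow> nat \<Rightarrow> bool) \<Rightarrow> (nat \<Rightarrow> nat) \<Rightarrow> nat set \<Rightarrow> nat \<Rightarrow> bool" where
  "discovered h E phi K v \<longleftrightarrow>
     (\<exists>x. cyc_seq h E K x \<and> v \<in> x ` {..<h} \<and> inj_on (phi \<circ> x) {..<h})"

text \<open>v[P]: probability that v is P-discovered in the graph on {..<n}. The colouring is
  uniform over {..<n} \<rightarrow> {..<h}; given the colouring, vertices are kept independently.\<close>
definition disc_prob :: "nat \<Rightarrow> nat \<Rightarrow> (nat \<Rightarrow> nat \<Rightarrow> bool) \<Rightarrow> (nat \<Rightarrow> real) \<Rightarrow> nat \<Rightarrow> real" where
  "disc_prob h n E P v =
     (\<Sum>phi \<in> {..<n} \<rightarrow>\<^sub>E {..<h}. (1 / real h) ^ n *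
        (\<Sum>K \<in> Pow {..<n}.
           (\<Prod>u\<in>K. P (phi u)) * (\<Prod>u\<in>{..<n} - K. 1 - P (phi u)) *
           (if discovered h E phi K v then 1 else 0)))"

end

theory Submission
  imports Defs
begin

text \<open>
  Upper bound: v is discovered only if the vertices of some h-cycle through v are all kept and
  get distinct colours. For one cycle this has probability at most h^h (1/h)^h times the
  product of the P i, which is at most 1/\<Lambda>; a union bound over the t_G(v) cycles gives
  v[P] \<le> t_G(v)/\<Lambda>.

  Lower bound: write each cycle through v as a list v, x_1, ..., x_(h-1) and look for one whose
  vertex x_i has colour i, colour 0 being kept with probability 1. The keep probabilities 2^-j
  of the colours 1, ..., h-1 are chosen one colour at a time, by induction on the length of
  the lists: dyadic pigeonholing on the sizes of the branches yields 2^j first vertices with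
  equally rich branches that, by induction, share the exponents of all later colours. Keeping
  the current colour with probability 2^-j, one of these first vertices is found with
  probability about 1/h, by a second-moment (Bonferroni) bound that loses only a factor
  1 - 1/e. Each colour costs a factor polynomial in h log n, which the hypothesis
  t_G(v) \<ge> \<Lambda> (2h log n)^((h-1)^2) 2/s pays for.
\<close>


section \<open>Finite product probability spaces\<close>

definition prob_weights :: "'s set \<Rightarrow> ('s \<Rightarrow> real) \<Rightarrow> bool" where
  "prob_weights S p \<longleftrightarrow> finite S \<and> (\<forall>s\<in>S. 0 \<le> p s) \<and> sum p S = 1"

definition prod_expect :: "'s set \<Rightarrow> ('s \<Rightarrow> real) \<Rightarrow> 'a set \<Rightarrow> (('a \<Rightarrow> 's) \<Rightarrow> real) \<Rightarrow> real" where
  "prod_expect S p V f = (\<Sum>w\<in>V \<rightarrow>\<^sub>E S. (\<Prod>u\<in>V. p (w u)) * f w)"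

definition prod_prob :: "'s set \<Rightarrow> ('s \<Rightarrow> real) \<Rightarrow> 'a set \<Rightarrow> (('a \<Rightarrow> 's) \<Rightarrow> bool) \<Rightarrow> real" where
  "prod_prob S p V X = prod_expect S p V (\<lambda>w. of_bool (X w))"

lemma prod_expect_mono:
  assumes "prob_weights S p" and "\<And>w. w \<in> V \<rightarrow>\<^sub>E S \<Longrightarrow> f w \<le> g w"
  shows "prod_expect S p V f \<le> prod_expect S p V g"
  unfolding prod_expect_def using assms
  by (intro sum_mono mult_left_mono prod_nonneg) (auto simp: prob_weights_def PiE_mem)

lemma prod_expect_sum: "prod_expect S p V (\<lambda>w. \<Sum>a\<in>A. f a w) = (\<Sum>a\<in>A. prod_expect S p V (f a))"
  unfolding prod_expect_def by (simp add: sum_distrib_left sum.swap[of _ A])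

lemma prod_expect_diff: "prod_expect S p V (\<lambda>w. f w - g w) = prod_expect S p V f - prod_expect S p V g"
  unfolding prod_expect_def by (simp add: right_diff_distrib sum_subtractf)

lemma prod_expect_divide: "prod_expect S p V (\<lambda>w. f w / c) = prod_expect S p V f / c"
  unfolding prod_expect_def by (simp add: sum_divide_distrib)

lemma prod_expect_remove:
  assumes "finite V" and "a \<in> V"
  shows "prod_expect S p V f = (\<Sum>s\<in>S. p s * prod_expect S p (V - {a}) (\<lambda>w. f (w(a := s))))"
proof -
  let ?W = "V - {a}"
  have V: "insert a ?W = V" using assms(2) by blast
  have PiE: "V \<rightarrow>\<^sub>E S = (\<lambda>(s, w). w(a := s)) ` (S \<times> (?W \<rightarrow>\<^sub>E S))"
    using PiE_insert_eq[of a ?W "\<lambda>_. S"] unfolding V .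
  have inj: "inj_on (\<lambda>(s, w). w(a := s)) (S \<times> (?W \<rightarrow>\<^sub>E S))"
    using inj_combinator[of a ?W "\<lambda>_. S"] by simp
  have "prod_expect S p V f = (\<Sum>(s, w)\<in>S \<times> (?W \<rightarrow>\<^sub>E S). (\<Prod>u\<in>V. p ((w(a := s)) u)) * f (w(a := s)))"
    unfolding prod_expect_def PiE sum.reindex[OF inj] by (simp add: case_prod_beta)
  also have "\<dots> = (\<Sum>(s, w)\<in>S \<times> (?W \<rightarrow>\<^sub>E S). p s * ((\<Prod>u\<in>?W. p (w u)) * f (w(a := s))))"
  proof (intro sum.cong refl, clarify)
    fix s w
    have "(\<Prod>u\<in>V. p ((w(a := s)) u)) = p s * (\<Prod>u\<in>?W. p ((w(a := s)) u))"
      using prod.remove[OF assms, of "\<lambda>u. p ((w(a := s)) u)"] by simp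
    also have "(\<Prod>u\<in>?W. p ((w(a := s)) u)) = (\<Prod>u\<in>?W. p (w u))"
      by (intro prod.cong) auto
    finally show "(\<Prod>u\<in>V. p ((w(a := s)) u)) * f (w(a := s)) = p s * ((\<Prod>u\<in>?W. p (w u)) * f (w(a := s)))"
      by simp
  qed
  finally show ?thesis
    by (simp add: sum.cartesian_product[symmetric] prod_expect_def sum_distrib_left)
qed

lemma prod_prob_nonneg: "prob_weights S p \<Longrightarrow> 0 \<le> prod_prob S p V X"
  unfolding prod_prob_def prod_expect_def prob_weights_def
  by (intro sum_nonneg mult_nonneg_nonneg prod_nonneg) (auto simp: PiE_mem)

lemma prod_prob_True:
  assumes "prob_weights S p" and "finite V"
  shows "prod_prob S p V (\<lambda>_. True) = 1"
  using assms(2)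
proof (induction V rule: finite_induct)
  case empty
  show ?case by (simp add: prod_prob_def prod_expect_def)
next
  case (insert a W)
  then show ?case
    using assms(1) by (simp add: prod_prob_def prod_expect_remove[of _ a] prob_weights_def flip: sum_distrib_right)
qed

lemma prod_prob_mono:
  assumes "prob_weights S p" and "\<And>w. w \<in> V \<rightarrow>\<^sub>E S \<Longrightarrow> X w \<Longrightarrow> Y w"
  shows "prod_prob S p V X \<le> prod_prob S p V Y"
  unfolding prod_prob_def by (rule prod_expect_mono) (use assms in auto)

lemma prod_prob_coordinate:
  assumes p: "prob_weights S p" and V: "finite V" "a \<in> V" and s: "s \<in> S"
    and X: "\<And>w t. X (w(a := t)) = X w"
  shows "prod_prob S p V (\<lambda>w. w a = s \<and> X w) = p s * prod_prob S p V X"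
proof -
  have split: "prod_prob S p V Y = (\<Sum>t\<in>S. p t * prod_prob S p (V - {a}) (\<lambda>w. Y (w(a := t))))" for Y
    unfolding prod_prob_def using V by (rule prod_expect_remove)
  let ?q = "prod_prob S p (V - {a}) X"
  have "prod_prob S p V (\<lambda>w. w a = s \<and> X w) = (\<Sum>t\<in>S. if t = s then p s * ?q else 0)"
    unfolding split[of "\<lambda>w. w a = s \<and> X w"] using X by (intro sum.cong) (auto simp: prod_prob_def prod_expect_def)
  also have "\<dots> = p s * ?q"
    using p s by (simp add: prob_weights_def)
  also have "?q = prod_prob S p V X"
    using p X by (simp add: split[of X] prob_weights_def flip: sum_distrib_right)
  finally show ?thesis .
qed

lemma prod_prob_cylinder:
  assumes p: "prob_weights S p" and V: "finite V" "W \<subseteq> V" and g: "g ` W \<subseteq> S"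
  shows "prod_prob S p V (\<lambda>w. \<forall>x\<in>W. w x = g x) = (\<Prod>x\<in>W. p (g x))"
  using finite_subset[OF V(2,1)] V(2) g
proof (induction W rule: finite_induct)
  case empty
  show ?case using prod_prob_True[OF p V(1)] by simp
next
  case (insert a W)
  have "prod_prob S p V (\<lambda>w. \<forall>x\<in>insert a W. w x = g x) =
      prod_prob S p V (\<lambda>w. w a = g a \<and> (\<forall>x\<in>W. w x = g x))"
    by simp
  also have "\<dots> = p (g a) * prod_prob S p V (\<lambda>w. \<forall>x\<in>W. w x = g x)"
    using insert by (intro prod_prob_coordinate[OF p V(1)]) auto
  finally show ?case using insert by simp
qed

lemma prod_prob_union_bound:
  assumes p: "prob_weights S p" and I: "finite I"
    and XY: "\<And>w. w \<in> V \<rightarrow>\<^sub>E S \<Longrightarrow> X w \<Longrightarrow> \<exists>i\<in>I. Y i w"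
  shows "prod_prob S p V X \<le> (\<Sum>i\<in>I. prod_prob S p V (Y i))"
proof -
  have "prod_prob S p V X \<le> prod_expect S p V (\<lambda>w. \<Sum>i\<in>I. of_bool (Y i w))"
    unfolding prod_prob_def
  proof (rule prod_expect_mono[OF p])
    fix w assume w: "w \<in> V \<rightarrow>\<^sub>E S"
    show "of_bool (X w) \<le> (\<Sum>i\<in>I. of_bool (Y i w) :: real)"
    proof (cases "X w")
      case True
      then obtain i where "i \<in> I" "Y i w" using XY w by blast
      then have "of_bool (Y i w) \<le> (\<Sum>i\<in>I. of_bool (Y i w) :: real)"
        using I by (intro member_le_sum) auto
      with \<open>Y i w\<close> True show ?thesis by simp
    qed (simp add: sum_nonneg)
  qed
  then show ?thesis by (simp add: prod_expect_sum prod_prob_def)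
qed

lemma of_bool_bonferroni:
  assumes "finite A"
  shows "(\<Sum>a\<in>A. of_bool (B a)) - (\<Sum>a\<in>A. \<Sum>b\<in>A - {a}. of_bool (B a \<and> B b)) / 2
    \<le> (of_bool (\<exists>a\<in>A. B a) :: real)"
proof -
  define m where "m = card {a\<in>A. B a}"
  have pairs: "(\<Sum>b\<in>A - {a}. of_bool (B a \<and> B b)) = of_bool (B a) * (real m - 1)"
    if "a \<in> A" for a
  proof (cases "B a")
    case True
    have "{a\<in>A. B a} - {a} = (A - {a}) \<inter> {b. B b}" by blast
    moreover have "card ({a\<in>A. B a} - {a}) = m - 1" using True that by (simp add: m_def)
    moreover have "m \<ge> 1" using True that assms by (auto simp: m_def Suc_le_eq card_gt_0_iff)
    ultimately show ?thesis using True assms by (simp add: of_nat_diff)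
  qed simp
  have singles: "(\<Sum>a\<in>A. of_bool (B a)) = real m"
    using assms by (simp add: m_def Int_def conj_commute)
  have "(\<Sum>a\<in>A. \<Sum>b\<in>A - {a}. of_bool (B a \<and> B b)) = (\<Sum>a\<in>A. of_bool (B a) * (real m - 1))"
    by (rule sum.cong[OF refl pairs])
  also have "\<dots> = real m * (real m - 1)"
    by (simp only: singles flip: sum_distrib_right)
  finally have doubles: "(\<Sum>a\<in>A. \<Sum>b\<in>A - {a}. of_bool (B a \<and> B b)) = real m * (real m - 1)" .
  have nonempty: "(\<exists>a\<in>A. B a) \<longleftrightarrow> 0 < m"
    using assms by (auto simp: m_def card_gt_0_iff)
  have "real m - real m * (real m - 1) / 2 \<le> of_bool (0 < m)"
  proof (cases "m \<le> 2")
    case True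
    then have "m = 0 \<or> m = 1 \<or> m = 2" by auto
    then show ?thesis by auto
  next
    case False
    then have "real m * 2 \<le> real m * (real m - 1)" by (intro mult_left_mono) auto
    then show ?thesis by simp
  qed
  then show ?thesis by (simp only: singles doubles nonempty)
qed

lemma prod_prob_bonferroni:
  assumes "prob_weights S p" and "finite A"
  shows "(\<Sum>a\<in>A. prod_prob S p V (B a)) - (\<Sum>a\<in>A. \<Sum>b\<in>A - {a}. prod_prob S p V (\<lambda>w. B a w \<and> B b w)) / 2
    \<le> prod_prob S p V (\<lambda>w. \<exists>a\<in>A. B a w)"
proof -
  have "(\<Sum>a\<in>A. prod_prob S p V (B a)) - (\<Sum>a\<in>A. \<Sum>b\<in>A - {a}. prod_prob S p V (\<lambda>w. B a w \<and> B b w)) / 2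
      = prod_expect S p V (\<lambda>w. (\<Sum>a\<in>A. of_bool (B a w)) - (\<Sum>a\<in>A. \<Sum>b\<in>A - {a}. of_bool (B a w \<and> B b w)) / 2)"
    by (simp add: prod_prob_def prod_expect_diff prod_expect_sum prod_expect_divide)
  also have "\<dots> \<le> prod_prob S p V (\<lambda>w. \<exists>a\<in>A. B a w)"
    unfolding prod_prob_def by (rule prod_expect_mono[OF assms(1) of_bool_bonferroni[OF assms(2)]])
  finally show ?thesis .
qed


section \<open>The discovery experiment as a product space\<close>

text \<open>Colouring and keeping are merged into one product experiment: an outcome w assigns each
  vertex u its colour fst (w u) and whether it is kept, snd (w u).\<close>

definition keep_outcomes :: "nat \<Rightarrow> (nat \<times> bool) set" where
  "keep_outcomes h = {..<h} \<times> UNIV"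

definition keep_weight :: "nat \<Rightarrow> (nat \<Rightarrow> real) \<Rightarrow> nat \<times> bool \<Rightarrow> real" where
  "keep_weight h P s = (if snd s then P (fst s) else 1 - P (fst s)) / real h"

definition keep_probs :: "nat \<Rightarrow> (nat \<Rightarrow> real) \<Rightarrow> bool" where
  "keep_probs h P \<longleftrightarrow> (\<forall>c<h. 0 \<le> P c \<and> P c \<le> 1)"

abbreviation trial_prob :: "nat \<Rightarrow> nat \<Rightarrow> (nat \<Rightarrow> real) \<Rightarrow> ((nat \<Rightarrow> nat \<times> bool) \<Rightarrow> bool) \<Rightarrow> real" where
  "trial_prob h n P \<equiv> prod_prob (keep_outcomes h) (keep_weight h P) {..<n}"

lemma prob_weights_keep_weight:
  assumes "0 < h" and "keep_probs h P"
  shows "prob_weights (keep_outcomes h) (keep_weight h P)"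
proof -
  have "sum (keep_weight h P) (keep_outcomes h) = (\<Sum>c<h. \<Sum>b\<in>UNIV. keep_weight h P (c, b))"
    unfolding keep_outcomes_def by (simp add: sum.cartesian_product)
  also have "\<dots> = 1"
    using assms(1) by (simp add: keep_weight_def UNIV_bool add_divide_distrib[symmetric])
  finally show ?thesis
    using assms(2) by (auto simp: prob_weights_def keep_outcomes_def keep_weight_def keep_probs_def)
qed

lemma keep_probs_Product: "P \<in> Product h \<Lambda> \<Longrightarrow> keep_probs h P"
  by (fastforce simp: Product_def keep_probs_def power_le_one)

lemma discovered_cong:
  assumes "\<And>u. u \<in> K \<Longrightarrow> phi u = phi' u"
  shows "discovered h E phi K v = discovered h E phi' K v"
proof -
  have "inj_on (phi \<circ> x) {..<h} \<longleftrightarrow> inj_on (phi' \<circ> x) {..<h}" if "cyc_seq h E K x" for x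
    using that assms by (intro inj_on_cong) (auto simp: cyc_seq_def)
  then show ?thesis unfolding discovered_def by blast
qed

lemma prod_keep_weight:
  assumes "finite V"
  shows "(\<Prod>u\<in>V. keep_weight h P (w u)) =
    (1 / real h) ^ card V * ((\<Prod>u\<in>{u\<in>V. snd (w u)}. P (fst (w u))) * (\<Prod>u\<in>V - {u\<in>V. snd (w u)}. 1 - P (fst (w u))))"
proof -
  have "(\<Prod>u\<in>V. keep_weight h P (w u)) =
      (1 / real h) ^ card V * (\<Prod>u\<in>V. if snd (w u) then P (fst (w u)) else 1 - P (fst (w u)))"
    by (simp add: keep_weight_def prod.distrib divide_inverse mult.commute)
  also have "(\<Prod>u\<in>V. if snd (w u) then P (fst (w u)) else 1 - P (fst (w u))) =
      (\<Prod>u\<in>{u\<in>V. snd (w u)}. P (fst (w u))) * (\<Prod>u\<in>V - {u\<in>V. snd (w u)}. 1 - P (fst (w u)))"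
  proof -
    have "V \<inter> {u. snd (w u)} = {u\<in>V. snd (w u)}" and "V \<inter> - {u. snd (w u)} = V - {u\<in>V. snd (w u)}"
      by auto
    then show ?thesis by (simp only: prod.If_cases[OF assms])
  qed
  finally show ?thesis .
qed

lemma disc_prob_eq_trial_prob:
  assumes "0 < h"
  shows "disc_prob h n E P v = trial_prob h n P (\<lambda>w. discovered h E (fst \<circ> w) {u\<in>{..<n}. snd (w u)} v)"
proof -
  let ?V = "{..<n}"
  let ?K = "\<lambda>w. {u\<in>?V. snd (w u)}"
  let ?term = "\<lambda>(phi, K). (1 / real h) ^ n * (\<Prod>u\<in>K. P (phi u)) * (\<Prod>u\<in>?V - K. 1 - P (phi u)) *
      of_bool (discovered h E phi K v)"
  have "trial_prob h n P (\<lambda>w. discovered h E (fst \<circ> w) (?K w) v) = (\<Sum>pk\<in>(?V \<rightarrow>\<^sub>E {..<h}) \<times> Pow ?V. ?term pk)"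
    unfolding prod_prob_def prod_expect_def
  proof (rule sum.reindex_bij_witness[where i = "\<lambda>(phi, K). \<lambda>u\<in>?V. (phi u, u \<in> K)"
        and j = "\<lambda>w. (\<lambda>u\<in>?V. fst (w u), ?K w)"])
    fix w assume w: "w \<in> ?V \<rightarrow>\<^sub>E keep_outcomes h"
    then show "(case (\<lambda>u\<in>?V. fst (w u), ?K w) of (phi, K) \<Rightarrow> \<lambda>u\<in>?V. (phi u, u \<in> K)) = w"
      by (auto simp: PiE_def extensional_def fun_eq_iff)
    show "(\<lambda>u\<in>?V. fst (w u), ?K w) \<in> (?V \<rightarrow>\<^sub>E {..<h}) \<times> Pow ?V"
      using w by (auto simp: PiE_def Pi_def keep_outcomes_def)
    have "discovered h E (\<lambda>u\<in>?V. fst (w u)) (?K w) v = discovered h E (fst \<circ> w) (?K w) v"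
      by (rule discovered_cong) auto
    moreover have "(\<Prod>u\<in>?K w. P ((\<lambda>u\<in>?V. fst (w u)) u)) = (\<Prod>u\<in>?K w. P (fst (w u)))"
      and "(\<Prod>u\<in>?V - ?K w. 1 - P ((\<lambda>u\<in>?V. fst (w u)) u)) = (\<Prod>u\<in>?V - ?K w. 1 - P (fst (w u)))"
      by (auto intro!: prod.cong)
    ultimately show "?term (\<lambda>u\<in>?V. fst (w u), ?K w) =
        (\<Prod>u\<in>?V. keep_weight h P (w u)) * of_bool (discovered h E (fst \<circ> w) (?K w) v)"
      by (simp add: prod_keep_weight)
  next
    fix pk assume "pk \<in> (?V \<rightarrow>\<^sub>E {..<h}) \<times> Pow ?V"
    then show "(case pk of (phi, K) \<Rightarrow> \<lambda>u\<in>?V. (phi u, u \<in> K)) \<in> ?V \<rightarrow>\<^sub>E keep_outcomes h"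
      and "(\<lambda>u\<in>?V. fst ((case pk of (phi, K) \<Rightarrow> \<lambda>u\<in>?V. (phi u, u \<in> K)) u),
            ?K (case pk of (phi, K) \<Rightarrow> \<lambda>u\<in>?V. (phi u, u \<in> K))) = pk"
      by (auto simp: PiE_def Pi_def extensional_def keep_outcomes_def fun_eq_iff split: prod.splits)
  qed
  also have "\<dots> = disc_prob h n E P v"
    unfolding disc_prob_def sum.cartesian_product[symmetric] by (simp add: sum_distrib_left of_bool_def mult.assoc)
  finally show ?thesis ..
qed


section \<open>Cycles through a vertex\<close>

definition cycle_edges :: "nat \<Rightarrow> (nat \<Rightarrow> nat) \<Rightarrow> nat set set" where
  "cycle_edges h x = (\<lambda>i. {x i, x ((i + 1) mod h)}) ` {..<h}"

lemma h_cycles_eq: "h_cycles h n E = {cycle_edges h x | x. cyc_seq h E {..<n} x}"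
  unfolding h_cycles_def cycle_edges_def by blast

lemma Union_cycle_edges:
  assumes "0 < h"
  shows "\<Union>(cycle_edges h x) = x ` {..<h}"
proof
  show "\<Union>(cycle_edges h x) \<subseteq> x ` {..<h}"
    using assms by (auto simp: cycle_edges_def)
  show "x ` {..<h} \<subseteq> \<Union>(cycle_edges h x)"
    by (auto simp: cycle_edges_def)
qed

lemma cycle_edges_cong: "(\<And>i. i < h \<Longrightarrow> x i = y i) \<Longrightarrow> cycle_edges h x = cycle_edges h y"
  unfolding cycle_edges_def by (intro image_cong) auto

lemma cyc_seq_succ_mem:
  assumes "cyc_seq h E S x" and "i < h"
  shows "x ((i + 1) mod h) \<in> S"
proof -
  have "(i + 1) mod h < h" using assms(2) by simp
  then show ?thesis using assms(1) by (auto simp: cyc_seq_def)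
qed

lemma cyc_seq_cong:
  assumes xy: "\<And>i. i < h \<Longrightarrow> x i = y i"
  shows "cyc_seq h E S x = cyc_seq h E S y"
proof -
  have "inj_on x {..<h} = inj_on y {..<h}" and "x ` {..<h} = y ` {..<h}"
    using xy by (auto intro!: inj_on_cong image_cong)
  moreover have "E (x i) (x ((i + 1) mod h)) = E (y i) (y ((i + 1) mod h))" if "i < h" for i
    using that xy[of i] xy[of "(i + 1) mod h"] by simp
  ultimately show ?thesis
    unfolding cyc_seq_def by auto
qed

lemma cyc_seq_mono: "cyc_seq h E K x \<Longrightarrow> K \<subseteq> S \<Longrightarrow> cyc_seq h E S x"
  unfolding cyc_seq_def by blast

lemma h_cycle_vertices:
  assumes "0 < h" and "C \<in> h_cycles h n E"
  shows "\<Union>C \<subseteq> {..<n}" and "card (\<Union>C) = h"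
proof -
  obtain x where x: "cyc_seq h E {..<n} x" and C: "C = cycle_edges h x"
    using assms(2) by (auto simp: h_cycles_eq)
  show "\<Union>C \<subseteq> {..<n}" and "card (\<Union>C) = h"
    using x card_image[of x "{..<h}"] by (simp_all add: C Union_cycle_edges[OF assms(1)] cyc_seq_def)
qed

lemma finite_h_cycles: "finite (h_cycles h n E)"
proof (rule finite_subset)
  show "h_cycles h n E \<subseteq> Pow (Pow {..<n})"
  proof
    fix C assume "C \<in> h_cycles h n E"
    then obtain x where x: "cyc_seq h E {..<n} x" and C: "C = cycle_edges h x"
      by (auto simp: h_cycles_eq)
    then show "C \<in> Pow (Pow {..<n})"
      using cyc_seq_succ_mem[OF x] by (auto simp: cycle_edges_def cyc_seq_def)
  qed
qed simp

lemma rotation_image: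
  fixes i0 h :: nat
  assumes "i0 < h"
  shows "(\<lambda>i. (i + i0) mod h) ` {..<h} = {..<h}"
proof
  have "0 < h" using assms by simp
  then show "(\<lambda>i. (i + i0) mod h) ` {..<h} \<subseteq> {..<h}"
    by auto
  show "{..<h} \<subseteq> (\<lambda>i. (i + i0) mod h) ` {..<h}"
  proof
    fix j assume "j \<in> {..<h}"
    then have "j = ((j + (h - i0)) mod h + i0) mod h"
      using assms by (simp add: mod_add_left_eq)
    then show "j \<in> (\<lambda>i. (i + i0) mod h) ` {..<h}"
      using assms by (intro image_eqI[where x = "(j + (h - i0)) mod h"]) auto
  qed
qed

lemma cyc_seq_rotate:
  assumes x: "cyc_seq h E S x" and i0: "i0 < h"
  shows "cyc_seq h E S (\<lambda>i. x ((i + i0) mod h))"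
    and "cycle_edges h (\<lambda>i. x ((i + i0) mod h)) = cycle_edges h x"
proof -
  let ?r = "\<lambda>i. (i + i0) mod h"
  have r: "?r ` {..<h} = {..<h}" by (rule rotation_image[OF i0])
  have succ: "?r ((i + 1) mod h) = (?r i + 1) mod h" for i
    by (simp add: mod_simps add_ac)
  have edge: "E (x (?r i)) (x (?r ((i + 1) mod h)))" if "i < h" for i
  proof -
    have "?r i < h" using i0 by simp
    then show ?thesis
      using x unfolding succ cyc_seq_def by blast
  qed
  have "inj_on ?r {..<h}"
    by (rule eq_card_imp_inj_on) (simp_all add: r)
  then have "inj_on (x \<circ> ?r) {..<h}"
    using x r by (intro comp_inj_on) (simp_all add: cyc_seq_def)
  then show "cyc_seq h E S (\<lambda>i. x (?r i))"
    using x r edge by (auto simp: cyc_seq_def o_def image_subset_iff)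
  show "cycle_edges h (\<lambda>i. x (?r i)) = cycle_edges h x"
    unfolding cycle_edges_def succ image_image[of "\<lambda>j. {x j, x ((j + 1) mod h)}" ?r, symmetric] r ..
qed

definition dlists :: "nat \<Rightarrow> nat \<Rightarrow> nat list set" where
  "dlists n k = {xs. length xs = k \<and> distinct xs \<and> set xs \<subseteq> {..<n}}"

lemma dlists_subset_lists: "dlists n k \<subseteq> {xs. set xs \<subseteq> {..<n} \<and> length xs = k}"
  by (auto simp: dlists_def)

lemma finite_dlists [simp]: "finite (dlists n k)"
  by (rule finite_subset[OF dlists_subset_lists]) (simp add: finite_lists_length_eq)

lemma card_dlists_le: "card (dlists n k) \<le> n ^ k"
  using card_mono[OF _ dlists_subset_lists] by (simp add: finite_lists_length_eq card_lists_length_eq)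

definition cycle_tails :: "nat \<Rightarrow> nat \<Rightarrow> (nat \<Rightarrow> nat \<Rightarrow> bool) \<Rightarrow> nat \<Rightarrow> nat list set" where
  "cycle_tails h n E v = {f. length f = h - 1 \<and> cyc_seq h E {..<n} (\<lambda>i. (v # f) ! i)}"

lemma cycle_tails_dlists:
  assumes "0 < h" and "f \<in> cycle_tails h n E v"
  shows "v # f \<in> dlists n h"
proof -
  have len: "length (v # f) = h" and x: "cyc_seq h E {..<n} (\<lambda>i. (v # f) ! i)"
    using assms by (auto simp: cycle_tails_def)
  have "distinct (v # f)"
    unfolding distinct_conv_nth
  proof (intro allI impI)
    fix i j assume "i < length (v # f)" "j < length (v # f)" "i \<noteq> j"
    then show "(v # f) ! i \<noteq> (v # f) ! j"
      using x len by (auto simp: cyc_seq_def dest: inj_onD)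
  qed
  moreover have "set (v # f) \<subseteq> {..<n}"
    using x len by (auto simp: cyc_seq_def set_conv_nth)
  ultimately show ?thesis using len by (simp add: dlists_def)
qed

lemma cycle_tails_subset_dlists:
  assumes "0 < h"
  shows "cycle_tails h n E v \<subseteq> dlists n (h - 1)"
proof
  fix f assume "f \<in> cycle_tails h n E v"
  then have "v # f \<in> dlists n h" by (rule cycle_tails_dlists[OF assms])
  then show "f \<in> dlists n (h - 1)" by (auto simp: dlists_def)
qed

lemma t_count_le_card_cycle_tails:
  assumes h: "0 < h"
  shows "t_count h n E v \<le> card (cycle_tails h n E v)"
proof -
  let ?edges = "\<lambda>f. cycle_edges h (\<lambda>i. (v # f) ! i)"
  have "{C \<in> h_cycles h n E. v \<in> \<Union>C} \<subseteq> ?edges ` cycle_tails h n E v"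
  proof
    fix C assume "C \<in> {C \<in> h_cycles h n E. v \<in> \<Union>C}"
    then obtain x where x: "cyc_seq h E {..<n} x" and C: "C = cycle_edges h x"
      and "v \<in> \<Union>(cycle_edges h x)"
      by (auto simp: h_cycles_eq)
    then obtain i0 where i0: "i0 < h" "v = x i0"
      by (auto simp: Union_cycle_edges[OF h])
    define f where "f = map (\<lambda>i. x ((Suc i + i0) mod h)) [0..<h - 1]"
    have nth: "(v # f) ! i = x ((i + i0) mod h)" if "i < h" for i
    proof (cases i)
      case 0
      then show ?thesis using i0 by simp
    next
      case (Suc j)
      then have "j < h - 1" using that by simp
      then show ?thesis by (simp add: f_def Suc)
    qed
    have "f \<in> cycle_tails h n E v"
      using cyc_seq_rotate(1)[OF x i0(1)] cyc_seq_cong[of h "\<lambda>i. (v # f) ! i", OF nth]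
      by (simp add: cycle_tails_def f_def)
    moreover have "?edges f = C"
      using cyc_seq_rotate(2)[OF x i0(1)] cycle_edges_cong[of h "\<lambda>i. (v # f) ! i", OF nth] C by simp
    ultimately show "C \<in> ?edges ` cycle_tails h n E v" by blast
  qed
  moreover have "finite (cycle_tails h n E v)"
    using cycle_tails_subset_dlists[OF h] by (rule finite_subset) simp
  ultimately have "t_count h n E v \<le> card (?edges ` cycle_tails h n E v)"
    unfolding t_count_def by (intro card_mono finite_imageI)
  also have "\<dots> \<le> card (cycle_tails h n E v)"
    using \<open>finite (cycle_tails h n E v)\<close> by (rule card_image_le)
  finally show ?thesis .
qed


section \<open>Vertices on few cycles are rarely discovered\<close>

definition kept_rainbow :: "nat set \<Rightarrow> (nat \<Rightarrow> nat \<times> bool) \<Rightarrow> bool" where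
  "kept_rainbow W w \<longleftrightarrow> (\<forall>u\<in>W. snd (w u)) \<and> inj_on (fst \<circ> w) W"

lemma trial_prob_rainbow_assignment:
  assumes h: "0 < h" and P: "keep_probs h P" and W: "W \<subseteq> {..<n}" "card W = h"
    and \<sigma>: "\<sigma> \<in> W \<rightarrow>\<^sub>E {..<h}" "inj_on \<sigma> W"
  shows "trial_prob h n P (\<lambda>w. \<forall>u\<in>W. w u = (\<sigma> u, True)) = (\<Prod>c<h. P c) / real h ^ h"
proof -
  have "\<sigma> ` W = {..<h}"
    using \<sigma> W(2) card_image[of \<sigma> W] by (intro card_subset_eq) (auto simp: PiE_iff)
  then have "(\<Prod>u\<in>W. P (\<sigma> u)) = (\<Prod>c<h. P c)"
    using prod.reindex[of \<sigma> W P] \<sigma>(2) by simp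
  moreover have "trial_prob h n P (\<lambda>w. \<forall>u\<in>W. w u = (\<sigma> u, True)) = (\<Prod>u\<in>W. keep_weight h P (\<sigma> u, True))"
    using \<sigma>(1) W(1) by (intro prod_prob_cylinder[OF prob_weights_keep_weight[OF h P]])
      (auto simp: keep_outcomes_def PiE_iff)
  ultimately show ?thesis
    by (simp add: keep_weight_def prod_dividef W(2))
qed

lemma trial_prob_kept_rainbow_le:
  assumes h: "0 < h" and P: "keep_probs h P" and W: "W \<subseteq> {..<n}" "card W = h"
  shows "trial_prob h n P (kept_rainbow W) \<le> (\<Prod>c<h. P c)"
proof -
  have finW: "finite W" using W(2) h card_ge_0_finite by blast
  let ?Inj = "{\<sigma> \<in> W \<rightarrow>\<^sub>E {..<h}. inj_on \<sigma> W}"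
  have "trial_prob h n P (kept_rainbow W) \<le> (\<Sum>\<sigma>\<in>?Inj. trial_prob h n P (\<lambda>w. \<forall>u\<in>W. w u = (\<sigma> u, True)))"
  proof (rule prod_prob_union_bound[OF prob_weights_keep_weight[OF h P]])
    show "finite ?Inj" using finW by (simp add: finite_PiE)
    fix w assume w: "w \<in> {..<n} \<rightarrow>\<^sub>E keep_outcomes h" and "kept_rainbow W w"
    then have "restrict (fst \<circ> w) W \<in> ?Inj" and "\<forall>u\<in>W. w u = (restrict (fst \<circ> w) W u, True)"
      using W(1) by (auto simp: kept_rainbow_def keep_outcomes_def PiE_iff inj_on_def prod_eq_iff)
    then show "\<exists>\<sigma>\<in>?Inj. \<forall>u\<in>W. w u = (\<sigma> u, True)" by blast
  qed
  also have "\<dots> = (\<Sum>\<sigma>\<in>?Inj. (\<Prod>c<h. P c) / real h ^ h)"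
    by (rule sum.cong[OF refl]) (auto intro: trial_prob_rainbow_assignment[OF h P W])
  also have "\<dots> = real (card ?Inj) * ((\<Prod>c<h. P c) / real h ^ h)"
    by simp
  also have "\<dots> \<le> real h ^ h * ((\<Prod>c<h. P c) / real h ^ h)"
  proof (rule mult_right_mono)
    have "card ?Inj \<le> card (W \<rightarrow>\<^sub>E {..<h})"
      using finW by (intro card_mono) (auto simp: finite_PiE)
    then show "real (card ?Inj) \<le> real h ^ h"
      using finW W(2) by (simp add: card_PiE flip: of_nat_power)
    show "0 \<le> (\<Prod>c<h. P c) / real h ^ h"
      using P by (auto simp: keep_probs_def intro!: divide_nonneg_nonneg prod_nonneg)
  qed
  also have "\<dots> = (\<Prod>c<h. P c)"
    using h by simp
  finally show ?thesis .
qed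

lemma discovered_imp_kept_rainbow_cycle:
  assumes h: "0 < h" and "discovered h E (fst \<circ> w) {u\<in>{..<n}. snd (w u)} v"
  shows "\<exists>C\<in>h_cycles h n E. v \<in> \<Union>C \<and> kept_rainbow (\<Union>C) w"
proof -
  obtain x where x: "cyc_seq h E {u\<in>{..<n}. snd (w u)} x" "v \<in> x ` {..<h}"
    and inj: "inj_on (fst \<circ> w \<circ> x) {..<h}"
    using assms(2) unfolding discovered_def by blast
  have "cycle_edges h x \<in> h_cycles h n E"
    unfolding h_cycles_eq using cyc_seq_mono[OF x(1), of "{..<n}"] by blast
  moreover have "kept_rainbow (x ` {..<h}) w"
    using x(1) inj_on_imageI[OF inj] by (auto simp: kept_rainbow_def cyc_seq_def)
  ultimately show ?thesis
    using x(2) by (metis Union_cycle_edges[OF h])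
qed

lemma disc_prob_le_t_count:
  assumes h: "0 < h" and P: "keep_probs h P"
  shows "disc_prob h n E P v \<le> real (t_count h n E v) * (\<Prod>c<h. P c)"
proof -
  define cycles where "cycles = {C \<in> h_cycles h n E. v \<in> \<Union>C}"
  have "disc_prob h n E P v \<le> (\<Sum>C\<in>cycles. trial_prob h n P (kept_rainbow (\<Union>C)))"
    unfolding disc_prob_eq_trial_prob[OF h]
  proof (rule prod_prob_union_bound[OF prob_weights_keep_weight[OF h P]])
    show "finite cycles"
      using finite_h_cycles by (simp add: cycles_def)
    fix w assume "discovered h E (fst \<circ> w) {u \<in> {..<n}. snd (w u)} v"
    then show "\<exists>C\<in>cycles. kept_rainbow (\<Union>C) w"
      using discovered_imp_kept_rainbow_cycle[OF h] unfolding cycles_def by blast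
  qed
  also have "\<dots> \<le> (\<Sum>C\<in>cycles. \<Prod>c<h. P c)"
  proof (rule sum_mono)
    fix C assume "C \<in> cycles"
    then have "C \<in> h_cycles h n E" by (simp add: cycles_def)
    then show "trial_prob h n P (kept_rainbow (\<Union>C)) \<le> (\<Prod>c<h. P c)"
      by (intro trial_prob_kept_rainbow_le[OF h P] h_cycle_vertices[OF h])
  qed
  also have "\<dots> = real (t_count h n E v) * (\<Prod>c<h. P c)"
    by (simp add: t_count_def cycles_def)
  finally show ?thesis .
qed

lemma disc_prob_le_if_few_cycles:
  assumes h: "0 < h" and P: "P \<in> Product h \<Lambda>" and \<Lambda>: "0 < \<Lambda>"
    and t: "real (t_count h n E v) \<le> \<Lambda> / log 2 n"
  shows "disc_prob h n E P v \<le> 1 / log 2 n"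
proof -
  have "disc_prob h n E P v \<le> real (t_count h n E v) * (\<Prod>c<h. P c)"
    by (rule disc_prob_le_t_count[OF h keep_probs_Product[OF P]])
  also have "\<dots> \<le> (\<Lambda> / log 2 n) * (1 / \<Lambda>)"
  proof (rule mult_mono[OF t])
    show "(\<Prod>c<h. P c) \<le> 1 / \<Lambda>"
      using P by (simp add: Product_def)
    show "0 \<le> \<Lambda> / log 2 n"
      using t by (rule order_trans[OF of_nat_0_le_iff])
    show "0 \<le> (\<Prod>c<h. P c)"
      using keep_probs_Product[OF P] by (auto simp: keep_probs_def intro: prod_nonneg)
  qed
  also have "\<dots> = 1 / log 2 n"
    using \<Lambda> by simp
  finally show ?thesis .
qed


section \<open>Finding lists of prescribed colours\<close>

definition branch :: "nat list set \<Rightarrow> nat \<Rightarrow> nat list set" where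
  "branch F a = {f. a # f \<in> F}"

definition found_from :: "nat \<Rightarrow> nat list set \<Rightarrow> (nat \<Rightarrow> nat \<times> bool) \<Rightarrow> bool" where
  "found_from d F w \<longleftrightarrow> (\<exists>f\<in>F. \<forall>i<length f. w (f ! i) = (d + i, True))"

lemma Cons_mem_dlists: "a # f \<in> dlists n (Suc k) \<longleftrightarrow> a < n \<and> a \<notin> set f \<and> f \<in> dlists n k"
  by (auto simp: dlists_def)

lemma branch_dlists: "F \<subseteq> dlists n (Suc k) \<Longrightarrow> branch F a \<subseteq> dlists n k"
  by (auto simp: branch_def Cons_mem_dlists)

lemma notin_branch: "F \<subseteq> dlists n (Suc k) \<Longrightarrow> f \<in> branch F a \<Longrightarrow> a \<notin> set f"
  by (auto simp: branch_def Cons_mem_dlists)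

lemma card_eq_sum_card_branch:
  assumes F: "F \<subseteq> dlists n (Suc k)"
  shows "card F = (\<Sum>a<n. card (branch F a))"
proof -
  have F_eq: "F = (\<Union>a<n. (#) a ` branch F a)"
  proof
    show "F \<subseteq> (\<Union>a<n. (#) a ` branch F a)"
    proof
      fix f assume "f \<in> F"
      moreover obtain a g where "f = a # g" and "a < n"
        using F \<open>f \<in> F\<close> by (cases f) (auto simp: dlists_def)
      ultimately show "f \<in> (\<Union>a<n. (#) a ` branch F a)"
        by (auto simp: branch_def)
    qed
  qed (auto simp: branch_def)
  have "finite (branch F a)" for a
    using branch_dlists[OF F] by (rule finite_subset) simp
  then have "card (\<Union>a<n. (#) a ` branch F a) = (\<Sum>a<n. card ((#) a ` branch F a))"
    by (intro card_UN_disjoint) auto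
  then have "card F = (\<Sum>a<n. card ((#) a ` branch F a))"
    using arg_cong[where f = card, OF F_eq] by simp
  also have "\<dots> = (\<Sum>a<n. card (branch F a))"
    by (simp add: card_image)
  finally show ?thesis .
qed

lemma found_from_upd:
  assumes "\<And>f. f \<in> F \<Longrightarrow> a \<notin> set f"
  shows "found_from d F (w(a := s)) = found_from d F w"
proof -
  have "(w(a := s)) (f ! i) = w (f ! i)" if "f \<in> F" and "i < length f" for f i
    using assms[OF that(1)] nth_mem[OF that(2)] by auto
  then have "(\<forall>i<length f. (w(a := s)) (f ! i) = (d + i, True)) \<longleftrightarrow> (\<forall>i<length f. w (f ! i) = (d + i, True))"
    if "f \<in> F" for f
    using that by auto
  then show ?thesis
    unfolding found_from_def by (rule bex_cong[OF refl])
qed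

definition found_via :: "nat \<Rightarrow> nat list set \<Rightarrow> nat \<Rightarrow> (nat \<Rightarrow> nat \<times> bool) \<Rightarrow> bool" where
  "found_via d F a w \<longleftrightarrow> w a = (d, True) \<and> found_from (Suc d) (branch F a) w"

lemma found_via_imp_found_from:
  assumes "found_via d F a w"
  shows "found_from d F w"
proof -
  obtain f where f: "a # f \<in> F" and w: "\<forall>i<length f. w (f ! i) = (Suc d + i, True)"
    using assms by (auto simp: found_via_def found_from_def branch_def)
  have "w ((a # f) ! i) = (d + i, True)" if "i < length (a # f)" for i
    using that assms w by (cases i) (auto simp: found_via_def)
  then show ?thesis
    using f unfolding found_from_def by blast
qed

lemma found_from_Nil: "found_from d {[]} = (\<lambda>_. True)"
  by (auto simp: found_from_def)

lemma trial_prob_start: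
  assumes h: "0 < h" and P: "keep_probs h P" and d: "d < h" and a: "a < n"
    and G: "\<And>f. f \<in> G \<Longrightarrow> a \<notin> set f"
  shows "trial_prob h n P (\<lambda>w. w a = (d, True) \<and> found_from (Suc d) G w)
    = P d / h * trial_prob h n P (found_from (Suc d) G)"
  using prod_prob_coordinate[OF prob_weights_keep_weight[OF h P] finite_lessThan, where a = a and s = "(d, True)"]
    found_from_upd[OF G] a d
  by (simp add: keep_outcomes_def keep_weight_def)

text \<open>The vertices of a found list have colours above d, so a found list avoids b when b has
  colour d; restricting to lists avoiding b makes the three events independent.\<close>

lemma trial_prob_start_pair_le:
  assumes h: "0 < h" and P: "keep_probs h P" and d: "d < h" and ab: "a < n" "b < n" "a \<noteq> b"
    and G: "\<And>f. f \<in> G \<Longrightarrow> a \<notin> set f"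
  shows "trial_prob h n P (\<lambda>w. (w a = (d, True) \<and> found_from (Suc d) G w) \<and> w b = (d, True))
    \<le> (P d / h)^2 * trial_prob h n P (found_from (Suc d) G)"
proof -
  define Gb where "Gb = {f\<in>G. b \<notin> set f}"
  have Gb: "\<And>f. f \<in> Gb \<Longrightarrow> a \<notin> set f" "\<And>f. f \<in> Gb \<Longrightarrow> b \<notin> set f"
    using G by (auto simp: Gb_def)
  have "trial_prob h n P (\<lambda>w. (w a = (d, True) \<and> found_from (Suc d) G w) \<and> w b = (d, True))
      \<le> trial_prob h n P (\<lambda>w. w b = (d, True) \<and> (w a = (d, True) \<and> found_from (Suc d) Gb w))"
  proof (rule prod_prob_mono[OF prob_weights_keep_weight[OF h P]])
    fix w assume w: "(w a = (d, True) \<and> found_from (Suc d) G w) \<and> w b = (d, True)"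
    then obtain f where f: "f \<in> G" "\<forall>i<length f. w (f ! i) = (Suc d + i, True)"
      by (auto simp: found_from_def)
    then have "b \<notin> set f"
      using w by (auto simp: in_set_conv_nth)
    with f w show "w b = (d, True) \<and> (w a = (d, True) \<and> found_from (Suc d) Gb w)"
      by (auto simp: found_from_def Gb_def)
  qed
  also have "\<dots> = P d / h * trial_prob h n P (\<lambda>w. w a = (d, True) \<and> found_from (Suc d) Gb w)"
    using prod_prob_coordinate[OF prob_weights_keep_weight[OF h P] finite_lessThan, where a = b and s = "(d, True)"]
      found_from_upd[OF Gb(2)] ab d
    by (simp add: keep_outcomes_def keep_weight_def)
  also have "\<dots> = (P d / h)^2 * trial_prob h n P (found_from (Suc d) Gb)"
    by (simp add: trial_prob_start[OF h P d ab(1) Gb(1)] power2_eq_square)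
  also have "\<dots> \<le> (P d / h)^2 * trial_prob h n P (found_from (Suc d) G)"
    by (intro mult_left_mono prod_prob_mono[OF prob_weights_keep_weight[OF h P]])
      (auto simp: found_from_def Gb_def)
  finally show ?thesis .
qed

text \<open>Second-moment step: as colour d is kept with probability 1 / card A, the pairwise terms
  of the Bonferroni inequality over the first vertices a \<in> A cost only a factor 1 - 1/(2h).\<close>

lemma trial_prob_found_via_bonferroni_term:
  assumes h: "0 < h" and P: "keep_probs h P" and d: "d < h" and F: "F \<subseteq> dlists n (Suc k)"
    and A: "A \<subseteq> {..<n}" "a \<in> A" and AP: "real (card A) * P d = 1"
  shows "P d / h * trial_prob h n P (found_from (Suc d) (branch F a)) * (1 - 1 / (2 * real h))
    \<le> trial_prob h n P (found_via d F a)
      - (\<Sum>b\<in>A - {a}. trial_prob h n P (\<lambda>w. found_via d F a w \<and> found_via d F b w)) / 2"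
proof -
  let ?q = "P d / h" and ?e = "trial_prob h n P (found_from (Suc d) (branch F a))"
  have finA: "finite A" using A(1) finite_subset by blast
  have q0: "0 \<le> ?q" and e0: "0 \<le> ?e"
    using P d prod_prob_nonneg[OF prob_weights_keep_weight[OF h P]] by (auto simp: keep_probs_def)
  have Aq: "real (card A) * ?q = 1 / h"
    using AP by simp
  have single: "trial_prob h n P (found_via d F a) = ?q * ?e"
    unfolding found_via_def using A notin_branch[OF F] by (intro trial_prob_start[OF h P d]) auto
  have "(\<Sum>b\<in>A - {a}. trial_prob h n P (\<lambda>w. found_via d F a w \<and> found_via d F b w))
      \<le> (\<Sum>b\<in>A - {a}. ?q^2 * ?e)" (is "?pairs \<le> _")
  proof (rule sum_mono)
    fix b assume b: "b \<in> A - {a}"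
    have "trial_prob h n P (\<lambda>w. found_via d F a w \<and> found_via d F b w)
        \<le> trial_prob h n P (\<lambda>w. (w a = (d, True) \<and> found_from (Suc d) (branch F a) w) \<and> w b = (d, True))"
      by (intro prod_prob_mono[OF prob_weights_keep_weight[OF h P]]) (auto simp: found_via_def)
    also have "\<dots> \<le> ?q^2 * ?e"
      using A b notin_branch[OF F] by (intro trial_prob_start_pair_le[OF h P d]) auto
    finally show "trial_prob h n P (\<lambda>w. found_via d F a w \<and> found_via d F b w) \<le> ?q^2 * ?e" .
  qed
  also have "\<dots> \<le> (\<Sum>b\<in>A. ?q^2 * ?e)"
    using q0 e0 by (intro sum_mono2[OF finA]) auto
  also have "\<dots> = ?q * ?e * (real (card A) * ?q)"
    by (simp add: power2_eq_square mult_ac)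
  also have "\<dots> = ?q * ?e / h"
    unfolding Aq by simp
  finally have pairs: "?pairs \<le> ?q * ?e / h" .
  have "?q * ?e * (1 - 1 / (2 * real h)) = ?q * ?e - ?q * ?e / h / 2"
    using h by (simp add: field_simps)
  also have "\<dots> \<le> ?q * ?e - ?pairs / 2"
    using pairs by (intro diff_left_mono divide_right_mono) simp_all
  finally show ?thesis
    unfolding single .
qed

lemma trial_prob_found_from_ge:
  assumes h: "2 \<le> h" and P: "keep_probs h P" and d: "d < h" and F: "F \<subseteq> dlists n (Suc k)"
    and A: "A \<subseteq> {..<n}" and AP: "real (card A) * P d = 1"
    and c: "0 \<le> c" "\<And>a. a \<in> A \<Longrightarrow> c \<le> trial_prob h n P (found_from (Suc d) (branch F a))"
  shows "(1 - 1 / exp 1) / h * c \<le> trial_prob h n P (found_from d F)"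
proof -
  have h0: "0 < h" using h by simp
  let ?q = "P d / h" and ?via = "found_via d F"
  have "1 / (2 * real h) \<le> 1 / exp 1"
    using h exp_le by (intro divide_left_mono) auto
  then have "(1 - 1 / exp 1) / h * c \<le> (1 - 1 / (2 * real h)) / h * c"
    using c(1) by (intro mult_right_mono divide_right_mono) auto
  also have "\<dots> = real (card A) * (?q * c * (1 - 1 / (2 * real h)))"
    using AP by (simp add: field_simps)
  also have "\<dots> \<le> (\<Sum>a\<in>A. ?q * trial_prob h n P (found_from (Suc d) (branch F a)) * (1 - 1 / (2 * real h)))"
  proof (rule sum_bounded_below)
    fix a assume "a \<in> A"
    have "0 \<le> ?q" and "0 \<le> 1 - 1 / (2 * real h)"
      using P d h by (auto simp: keep_probs_def field_simps)
    then show "?q * c * (1 - 1 / (2 * real h))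
        \<le> ?q * trial_prob h n P (found_from (Suc d) (branch F a)) * (1 - 1 / (2 * real h))"
      using c(2)[OF \<open>a \<in> A\<close>] by (intro mult_right_mono mult_left_mono)
  qed
  also have "\<dots> \<le> (\<Sum>a\<in>A. trial_prob h n P (?via a)
      - (\<Sum>b\<in>A - {a}. trial_prob h n P (\<lambda>w. ?via a w \<and> ?via b w)) / 2)"
    by (intro sum_mono trial_prob_found_via_bonferroni_term[OF h0 P d F A _ AP])
  also have "\<dots> = (\<Sum>a\<in>A. trial_prob h n P (?via a))
      - (\<Sum>a\<in>A. \<Sum>b\<in>A - {a}. trial_prob h n P (\<lambda>w. ?via a w \<and> ?via b w)) / 2"
    by (simp add: sum_subtractf sum_divide_distrib)
  also have "\<dots> \<le> trial_prob h n P (\<lambda>w. \<exists>a\<in>A. ?via a w)"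
    using A finite_subset by (intro prod_prob_bonferroni[OF prob_weights_keep_weight[OF h0 P]]) blast
  also have "\<dots> \<le> trial_prob h n P (found_from d F)"
    by (rule prod_prob_mono[OF prob_weights_keep_weight[OF h0 P]]) (auto intro: found_via_imp_found_from)
  finally show ?thesis .
qed


section \<open>Dyadic pigeonholing\<close>

lemma le_sum_dyadic_levels:
  fixes c :: nat
  assumes "c < 2 ^ N"
  shows "c \<le> (\<Sum>m<N. if 2 ^ m \<le> c then 2 ^ m else 0)"
  using assms
proof (induction N arbitrary: c)
  case 0
  then show ?case by simp
next
  case (Suc N)
  show ?case
  proof (cases "c < 2 ^ N")
    case True
    then have "c \<le> (\<Sum>m<N. if 2 ^ m \<le> c then 2 ^ m else 0)"
      by (rule Suc.IH)
    then show ?thesis by simp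
  next
    case False
    then have "c - 2 ^ N \<le> (\<Sum>m<N. if 2 ^ m \<le> c - 2 ^ N then 2 ^ m else 0)"
      using Suc.prems by (intro Suc.IH) simp
    also have "\<dots> \<le> (\<Sum>m<N. if 2 ^ m \<le> c then 2 ^ m else 0)"
      by (intro sum_mono) auto
    finally show ?thesis
      using False by simp
  qed
qed

lemma dyadic_pigeonhole:
  fixes c :: "'a \<Rightarrow> nat"
  assumes A: "finite A" and N: "0 < N" and c: "\<And>a. a \<in> A \<Longrightarrow> c a < 2 ^ N"
  shows "\<exists>m<N. (\<Sum>a\<in>A. c a) \<le> N * 2 ^ m * card {a\<in>A. 2 ^ m \<le> c a}"
proof (rule ccontr)
  assume "\<not> ?thesis"
  then have less: "N * (2 ^ m * card {a\<in>A. 2 ^ m \<le> c a}) < (\<Sum>a\<in>A. c a)" if "m < N" for m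
    using that by (auto simp: mult.assoc)
  have "(\<Sum>a\<in>A. c a) \<le> (\<Sum>a\<in>A. \<Sum>m<N. if 2 ^ m \<le> c a then 2 ^ m else 0)"
    by (intro sum_mono le_sum_dyadic_levels c)
  also have "\<dots> = (\<Sum>m<N. 2 ^ m * card {a\<in>A. 2 ^ m \<le> c a})"
    using A by (subst sum.swap) (simp add: sum.inter_filter[symmetric] mult.commute)
  finally have "(\<Sum>a\<in>A. c a) \<le> (\<Sum>m<N. 2 ^ m * card {a\<in>A. 2 ^ m \<le> c a})" .
  then have "N * (\<Sum>a\<in>A. c a) \<le> N * (\<Sum>m<N. 2 ^ m * card {a\<in>A. 2 ^ m \<le> c a})"
    by (rule mult_le_mono2)
  also have "\<dots> = (\<Sum>m<N. N * (2 ^ m * card {a\<in>A. 2 ^ m \<le> c a}))"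
    by (rule sum_distrib_left)
  also have "\<dots> < (\<Sum>m<N. \<Sum>a\<in>A. c a)"
    using N less by (intro sum_strict_mono) auto
  finally show False by simp
qed

definition exponent_lists :: "nat \<Rightarrow> nat \<Rightarrow> nat list set" where
  "exponent_lists J k = {js. set js \<subseteq> {..J} \<and> length js = k}"

lemma finite_exponent_lists: "finite (exponent_lists J k)"
  by (simp add: exponent_lists_def finite_lists_length_eq)

lemma card_exponent_lists: "card (exponent_lists J k) = (J + 1) ^ k"
  by (simp add: exponent_lists_def card_lists_length_eq)

lemma Cons_mem_exponent_lists:
  "j # js \<in> exponent_lists J (Suc k) \<longleftrightarrow> j \<le> J \<and> js \<in> exponent_lists J k"
  by (auto simp: exponent_lists_def)

lemma exists_common_exponents:
  assumes A: "finite A" and R: "\<forall>a\<in>A. \<exists>js\<in>exponent_lists J k. R a js"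
  shows "\<exists>js\<in>exponent_lists J k. \<exists>A'\<subseteq>A. card A \<le> card A' * (J + 1) ^ k \<and> (\<forall>a\<in>A'. R a js)"
proof -
  have "\<exists>f. \<forall>a\<in>A. f a \<in> exponent_lists J k \<and> R a (f a)"
    using R by (intro bchoice) blast
  then obtain f where f: "\<forall>a\<in>A. f a \<in> exponent_lists J k \<and> R a (f a)"
    by blast
  have "f \<in> A \<rightarrow> exponent_lists J k"
    using f by blast
  moreover have "exponent_lists J k \<noteq> {}"
    using card_exponent_lists[of J k] by auto
  ultimately have "\<exists>js\<in>exponent_lists J k. card A \<le> card (f -` {js} \<inter> A) * card (exponent_lists J k)"
    using A by (intro pigeonhole_card finite_exponent_lists)
  then obtain js where "js \<in> exponent_lists J k" and "card A \<le> card (f -` {js} \<inter> A) * (J + 1) ^ k"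
    by (auto simp: card_exponent_lists)
  moreover have "\<forall>a\<in>f -` {js} \<inter> A. R a js"
    using f by auto
  ultimately show ?thesis
    by (intro bexI[of _ js] exI[of _ "f -` {js} \<inter> A"]) auto
qed

lemma dense_first_vertices:
  assumes N: "0 < N" "card (dlists n k) < 2 ^ N" and F: "F \<subseteq> dlists n (Suc k)"
  shows "\<exists>m. real (card F) \<le> real N * 2 ^ m * card {a\<in>{..<n}. 2 ^ m \<le> card (branch F a)}"
proof -
  have small: "card (branch F a) < 2 ^ N" for a
    using card_mono[OF finite_dlists branch_dlists[OF F]] N(2) by (rule le_less_trans)
  have "\<exists>m<N. (\<Sum>a<n. card (branch F a)) \<le> N * 2 ^ m * card {a\<in>{..<n}. 2 ^ m \<le> card (branch F a)}"
    by (rule dyadic_pigeonhole[OF finite_lessThan N(1) small])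
  then obtain m where "(\<Sum>a<n. card (branch F a)) \<le> N * 2 ^ m * card {a\<in>{..<n}. 2 ^ m \<le> card (branch F a)}"
    by blast
  then have "real (card F) \<le> real (N * 2 ^ m * card {a\<in>{..<n}. 2 ^ m \<le> card (branch F a)})"
    unfolding of_nat_le_iff card_eq_sum_card_branch[OF F] .
  then show ?thesis
    by auto
qed


lemma least_dyadic_exponent:
  fixes x :: real
  assumes "x \<le> 2 ^ J"
  shows "\<exists>j\<le>J. x \<le> 2 ^ j \<and> (0 < j \<longrightarrow> 2 ^ j < 2 * x)"
proof -
  define j where "j = (LEAST j. x \<le> 2 ^ j)"
  have "x \<le> 2 ^ j" and "j \<le> J"
    unfolding j_def using assms by (rule LeastI, rule Least_le)
  moreover have "2 ^ j < 2 * x" if "0 < j"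
  proof -
    have "\<not> x \<le> 2 ^ (j - 1)"
      using not_less_Least[of "j - 1" "\<lambda>j. x \<le> 2 ^ j"] that by (simp add: j_def)
    then show ?thesis
      using that by (cases j) simp_all
  qed
  ultimately show ?thesis by blast
qed

section \<open>Choosing the keep probabilities colour by colour\<close>

text \<open>In the step for the first vertex of a list, dyadic pigeonholing loses a factor N \<le> B,
  agreeing on the exponents of the later colours a factor (J + 1)^k \<le> B^k, and rounding the
  exponent of the current colour a factor 2.\<close>

fun threshold :: "real \<Rightarrow> nat \<Rightarrow> real" where
  "threshold B 0 = 1"
| "threshold B (Suc k) = 2 * B ^ Suc k * threshold B k"

lemma one_le_threshold: "1 \<le> B \<Longrightarrow> 1 \<le> threshold B k"
proof (induction k)
  case (Suc k)
  have "1 * 1 \<le> B ^ Suc k * threshold B k"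
    using Suc by (intro mult_mono one_le_power) auto
  then show ?case by simp
qed simp

lemma threshold_le: "1 \<le> B \<Longrightarrow> threshold B k \<le> 2 ^ k * B ^ (k * k)"
proof (induction k)
  case (Suc k)
  have "threshold B (Suc k) \<le> 2 * B ^ Suc k * (2 ^ k * B ^ (k * k))"
    using Suc by (simp add: mult_left_mono)
  also have "\<dots> = 2 ^ Suc k * B ^ (Suc k + k * k)"
    by (simp add: power_add)
  also have "\<dots> \<le> 2 ^ Suc k * B ^ (Suc k * Suc k)"
    using Suc.prems by (intro mult_left_mono power_increasing) auto
  finally show ?case .
qed simp

text \<open>The exponent j of the current colour: s is the exponent sum already chosen for the
  later colours against the target min \<Lambda> (2^m / T), and c counts the first vertices
  available.\<close>

lemma exists_exponent_below_count:
  fixes L \<Lambda> T :: real and s m J c :: nat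
  assumes L: "0 < L" "L \<le> \<Lambda>" "\<Lambda> \<le> 2 ^ J" and T: "0 < T"
    and s: "min \<Lambda> (2 ^ m / T) \<le> 2 ^ s" and c: "2 * T * L \<le> (2::real) ^ m * c"
  shows "\<exists>j\<le>J. L \<le> 2 ^ (j + s) \<and> 2 ^ j \<le> c"
proof -
  define x where "x = L / 2 ^ s"
  have "x \<le> L"
    using divide_left_mono[of 1 "2 ^ s" L] L(1) by (simp add: x_def)
  then obtain j where j: "j \<le> J" "x \<le> 2 ^ j" "0 < j \<longrightarrow> 2 ^ j < 2 * x"
    using least_dyadic_exponent[of x J] L by force
  have "(2::real) ^ j \<le> c"
  proof (cases "j = 0")
    case True
    have "0 < 2 * T * L"
      using L T by simp
    then have "0 < (2::real) ^ m * c"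
      using c by linarith
    then show ?thesis using True by (simp add: zero_less_mult_iff)
  next
    case False
    then have x_gt: "2 ^ j < 2 * x"
      using j(3) by simp
    have "(2::real) ^ 1 \<le> 2 ^ j"
      using False by (intro power_increasing) auto
    with x_gt have "1 < x" by simp
    then have "2 ^ s < L"
      by (simp add: x_def field_simps)
    then have "2 ^ m / T \<le> 2 ^ s"
      using s L by (simp add: min_def split: if_splits)
    then have "2 * x \<le> 2 * L * T / 2 ^ m"
      using L T by (simp add: x_def field_simps)
    also have "\<dots> \<le> c"
      using c by (simp add: field_simps)
    finally show ?thesis using x_gt by linarith
  qed
  moreover have "L \<le> 2 ^ (j + s)"
    using j(2) by (simp add: x_def field_simps power_add)
  ultimately show ?thesis
    using j(1) by (metis of_nat_le_iff of_nat_numeral of_nat_power)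
qed

lemma threshold_Suc_le_count:
  fixes B L :: real and c c\<^sub>1 c\<^sub>2 :: nat
  assumes B: "real N \<le> B" "real J + 1 \<le> B"
    and c: "threshold B (Suc k) * L \<le> c" "real c \<le> real N * 2 ^ m * c\<^sub>1" "c\<^sub>1 \<le> c\<^sub>2 * (J + 1) ^ k"
  shows "2 * threshold B k * L \<le> (2::real) ^ m * c\<^sub>2"
proof -
  have B1: "1 \<le> B" using B by linarith
  have "real c\<^sub>1 \<le> real (c\<^sub>2 * (J + 1) ^ k)"
    using c(3) by (simp only: of_nat_le_iff)
  also have "\<dots> \<le> c\<^sub>2 * B ^ k"
    using B(2) by (simp add: mult_left_mono power_mono add.commute)
  finally have c12: "real c\<^sub>1 \<le> c\<^sub>2 * B ^ k" .
  have "B ^ Suc k * (2 * threshold B k * L) = threshold B (Suc k) * L"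
    by (simp add: mult_ac)
  also have "\<dots> \<le> real N * 2 ^ m * c\<^sub>1"
    using c(1,2) by linarith
  also have "\<dots> \<le> B * 2 ^ m * (c\<^sub>2 * B ^ k)"
    by (rule mult_mono[OF mult_right_mono[OF B(1)] c12]) (use B1 in simp_all)
  also have "\<dots> = B ^ Suc k * ((2::real) ^ m * c\<^sub>2)"
    by (simp add: mult_ac)
  finally show ?thesis
    by (rule mult_left_le_imp_le) (use B1 in simp)
qed

lemma branch_exponents:
  fixes Q :: "nat list set \<Rightarrow> nat list \<Rightarrow> bool" and B \<Lambda> L :: real
  assumes N: "0 < N" "real N \<le> B" "card (dlists n k) < 2 ^ N"
    and J: "real J + 1 \<le> B" "\<Lambda> \<le> 2 ^ J"
    and IH: "\<And>G L'. G \<subseteq> dlists n k \<Longrightarrow> 0 < L' \<Longrightarrow> L' \<le> \<Lambda> \<Longrightarrow> threshold B k * L' \<le> card G \<Longrightarrow>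
      \<exists>js\<in>exponent_lists J k. L' \<le> 2 ^ sum_list js \<and> Q G js"
    and F: "F \<subseteq> dlists n (Suc k)" and L: "0 < L" "L \<le> \<Lambda>" "threshold B (Suc k) * L \<le> card F"
  shows "\<exists>A j js. A \<subseteq> {..<n} \<and> card A = 2 ^ j \<and> j \<le> J \<and> js \<in> exponent_lists J k \<and>
    L \<le> 2 ^ (j + sum_list js) \<and> (\<forall>a\<in>A. Q (branch F a) js)"
proof -
  let ?T = "threshold B k"
  have T: "0 < ?T" using one_le_threshold[of B k] N(2) J(1) by linarith
  obtain m where m: "real (card F) \<le> real N * 2 ^ m * card {a\<in>{..<n}. 2 ^ m \<le> card (branch F a)}"
    using dense_first_vertices[OF N(1,3) F] by blast
  define A\<^sub>1 where "A\<^sub>1 = {a\<in>{..<n}. 2 ^ m \<le> card (branch F a)}"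
  define L' where "L' = min \<Lambda> (2 ^ m / ?T)"
  have L': "0 < L'" "L' \<le> \<Lambda>" "?T * L' \<le> 2 ^ m"
    using L T by (auto simp: L'_def min_def field_simps)
  have "\<forall>a\<in>A\<^sub>1. \<exists>js\<in>exponent_lists J k. L' \<le> 2 ^ sum_list js \<and> Q (branch F a) js"
  proof
    fix a assume "a \<in> A\<^sub>1"
    then have "(2::real) ^ m \<le> card (branch F a)"
      by (simp add: A\<^sub>1_def)
    then show "\<exists>js\<in>exponent_lists J k. L' \<le> 2 ^ sum_list js \<and> Q (branch F a) js"
      using L'(3) by (intro IH[OF branch_dlists[OF F] L'(1,2)]) linarith
  qed
  then have "\<exists>js\<in>exponent_lists J k. \<exists>A'\<subseteq>A\<^sub>1. card A\<^sub>1 \<le> card A' * (J + 1) ^ k \<and>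
      (\<forall>a\<in>A'. L' \<le> 2 ^ sum_list js \<and> Q (branch F a) js)"
    by (rule exists_common_exponents[rotated]) (simp add: A\<^sub>1_def)
  then obtain js A\<^sub>2 where js: "js \<in> exponent_lists J k" and A\<^sub>2: "A\<^sub>2 \<subseteq> A\<^sub>1" "card A\<^sub>1 \<le> card A\<^sub>2 * (J + 1) ^ k"
    and good: "\<forall>a\<in>A\<^sub>2. L' \<le> 2 ^ sum_list js \<and> Q (branch F a) js"
    by blast
  have count: "2 * ?T * L \<le> (2::real) ^ m * card A\<^sub>2"
    using m A\<^sub>2(2) by (intro threshold_Suc_le_count[OF N(2) J(1) L(3)]) (simp_all add: A\<^sub>1_def)
  have "A\<^sub>2 \<noteq> {}"
    using count L(1) T by (auto simp: mult_le_0_iff)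
  then have "min \<Lambda> (2 ^ m / ?T) \<le> 2 ^ sum_list js"
    using good by (auto simp: L'_def)
  then have "\<exists>j\<le>J. L \<le> 2 ^ (j + sum_list js) \<and> 2 ^ j \<le> card A\<^sub>2"
    by (rule exists_exponent_below_count[OF L(1,2) J(2) T _ count])
  then obtain j where j: "j \<le> J" "L \<le> 2 ^ (j + sum_list js)" "2 ^ j \<le> card A\<^sub>2"
    by blast
  obtain A where A: "A \<subseteq> A\<^sub>2" "card A = 2 ^ j" "finite A"
    by (rule obtain_subset_with_card_n[OF j(3)])
  have "A \<subseteq> {..<n}" and "\<forall>a\<in>A. Q (branch F a) js"
    using A(1) A\<^sub>2(1) good by (auto simp: A\<^sub>1_def)
  then show ?thesis
    using A(2) j(1,2) js by (intro exI[of _ A] exI[of _ j] exI[of _ js]) blast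
qed

definition keeps_from :: "nat \<Rightarrow> nat list \<Rightarrow> (nat \<Rightarrow> real) \<Rightarrow> bool" where
  "keeps_from d js P \<longleftrightarrow> (\<forall>i<length js. P (d + i) = (1 / 2) ^ (js ! i))"

lemma keeps_from_Cons: "keeps_from d (j # js) P \<longleftrightarrow> P d = (1 / 2) ^ j \<and> keeps_from (Suc d) js P"
  by (auto simp: keeps_from_def less_Suc_eq_0_disj)

definition finds :: "nat \<Rightarrow> nat \<Rightarrow> nat \<Rightarrow> nat list \<Rightarrow> nat list set \<Rightarrow> real \<Rightarrow> bool" where
  "finds h n d js F c \<longleftrightarrow>
    (\<forall>P. keep_probs h P \<longrightarrow> keeps_from d js P \<longrightarrow> c \<le> trial_prob h n P (found_from d F))"

lemma finds_Nil: "0 < h \<Longrightarrow> finds h n d [] {[]} 1"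
  using prod_prob_True[OF prob_weights_keep_weight finite_lessThan]
  by (simp add: finds_def found_from_Nil)

lemma finds_Cons:
  assumes h: "2 \<le> h" and d: "d < h" and F: "F \<subseteq> dlists n (Suc k)"
    and A: "A \<subseteq> {..<n}" "card A = 2 ^ j" and c: "0 \<le> c"
    and found: "\<forall>a\<in>A. finds h n (Suc d) js (branch F a) c"
  shows "finds h n d (j # js) F ((1 - 1 / exp 1) / h * c)"
  unfolding finds_def
proof (intro allI impI)
  fix P assume P: "keep_probs h P" and "keeps_from d (j # js) P"
  then have Pd: "P d = (1 / 2) ^ j" and keeps: "keeps_from (Suc d) js P"
    by (simp_all add: keeps_from_Cons)
  have "real (card A) * P d = 1"
    using A(2) Pd by (simp add: power_one_over)
  moreover have "c \<le> trial_prob h n P (found_from (Suc d) (branch F a))" if "a \<in> A" for a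
    using found that P keeps by (auto simp: finds_def)
  ultimately show "(1 - 1 / exp 1) / h * c \<le> trial_prob h n P (found_from d F)"
    by (rule trial_prob_found_from_ge[OF h P d F A(1) _ c])
qed

lemma found_from_exponents:
  fixes B \<Lambda> :: real
  assumes h: "2 \<le> h" and n: "1 \<le> n" and N: "0 < N" "real N \<le> B" "n ^ h < 2 ^ N"
    and J: "real J + 1 \<le> B" "\<Lambda> \<le> 2 ^ J"
  shows "F \<subseteq> dlists n k \<Longrightarrow> 0 < L \<Longrightarrow> L \<le> \<Lambda> \<Longrightarrow> threshold B k * L \<le> card F \<Longrightarrow> d + k \<le> h \<Longrightarrow>
    \<exists>js\<in>exponent_lists J k. L \<le> 2 ^ sum_list js \<and> finds h n d js F (((1 - 1 / exp 1) / h) ^ k)"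
proof (induction k arbitrary: d F L)
  case 0
  have "F \<subseteq> {[]}" and "L \<le> card F"
    using "0.prems" by (auto simp: dlists_def)
  then have "F = {[]}"
    using "0.prems"(2) by (auto simp: subset_singleton_iff)
  then show ?case
    using \<open>L \<le> card F\<close> finds_Nil h by (simp add: exponent_lists_def)
next
  case (Suc k)
  let ?c = "(1 - 1 / exp 1) / h"
  have "card (dlists n k) \<le> n ^ k" by (rule card_dlists_le)
  also have "\<dots> \<le> n ^ h" using n Suc.prems(5) by (intro power_increasing) auto
  finally have small: "card (dlists n k) < 2 ^ N" using N(3) by linarith
  have IH: "\<And>G L'. G \<subseteq> dlists n k \<Longrightarrow> 0 < L' \<Longrightarrow> L' \<le> \<Lambda> \<Longrightarrow> threshold B k * L' \<le> card G \<Longrightarrow>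
      \<exists>js\<in>exponent_lists J k. L' \<le> 2 ^ sum_list js \<and> finds h n (Suc d) js G (?c ^ k)"
    using Suc.IH Suc.prems(5) by simp
  have "\<exists>A j js. A \<subseteq> {..<n} \<and> card A = 2 ^ j \<and> j \<le> J \<and> js \<in> exponent_lists J k \<and>
      L \<le> 2 ^ (j + sum_list js) \<and> (\<forall>a\<in>A. finds h n (Suc d) js (branch F a) (?c ^ k))"
    by (rule branch_exponents[OF N(1,2) small J IH Suc.prems(1-4)])
  then obtain A j js where A: "A \<subseteq> {..<n}" "card A = 2 ^ j" and j: "j \<le> J"
    and js: "js \<in> exponent_lists J k" and L: "L \<le> 2 ^ (j + sum_list js)"
    and found: "\<forall>a\<in>A. finds h n (Suc d) js (branch F a) (?c ^ k)"
    by blast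
  have "1 / exp 1 \<le> (1::real)"
    using exp_ge_add_one_self[of 1] by (simp add: divide_le_eq)
  then have "finds h n d (j # js) F (?c * ?c ^ k)"
    using Suc.prems(5) by (intro finds_Cons[OF h _ Suc.prems(1) A _ found]) simp_all
  then show ?case
  proof (intro bexI[of _ "j # js"] conjI)
    show "j # js \<in> exponent_lists J (Suc k)"
      using j js by (simp add: Cons_mem_exponent_lists)
  qed (use L in simp_all)
qed

section \<open>Vertices on many cycles are discovered\<close>

lemma power_less_two_power_log:
  fixes n h :: nat
  assumes n: "2 \<le> n" and h: "0 < h"
  shows "\<exists>N. 0 < N \<and> real N \<le> 2 * real h * log 2 n \<and> n ^ h < 2 ^ N"
proof -
  define lg where "lg = log 2 (real n)"
  define b where "b = nat \<lfloor>lg\<rfloor> + 1"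
  have lg: "1 \<le> lg"
    using n by (simp add: lg_def le_log_iff)
  have "real b = real_of_int \<lfloor>lg\<rfloor> + 1"
    using lg by (simp add: b_def)
  then have b: "lg < real b" "real b \<le> lg + 1"
    using real_of_int_floor_add_one_gt[of lg] of_int_floor_le[of lg] by linarith+
  have "real n = 2 powr lg"
    using n by (simp add: lg_def)
  also have "\<dots> < 2 powr real b"
    using b by (intro powr_less_mono) auto
  finally have "real n < 2 ^ b"
    by (simp add: powr_realpow)
  then have "n < 2 ^ b"
    by (metis of_nat_less_iff of_nat_numeral of_nat_power)
  then have "n ^ h < 2 ^ (b * h)"
    using h by (simp add: power_mult power_strict_mono)
  moreover have "real (b * h) \<le> 2 * real h * lg"
    using b lg h by (simp add: mult_right_mono)
  ultimately show ?thesis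
    using h by (intro exI[of _ "b * h"]) (simp add: lg_def b_def)
qed

lemma exists_dyadic_bound:
  fixes \<Lambda> :: real
  assumes "1 \<le> \<Lambda>"
  shows "\<exists>J::nat. real J \<le> log 2 \<Lambda> + 1 \<and> \<Lambda> \<le> 2 ^ J"
proof -
  define J where "J = nat \<lceil>log 2 \<Lambda>\<rceil>"
  have "0 \<le> log 2 \<Lambda>" using assms by simp
  then have J: "log 2 \<Lambda> \<le> real J" "real J \<le> log 2 \<Lambda> + 1"
    using le_of_int_ceiling[of "log 2 \<Lambda>"] of_int_ceiling_le_add_one[of "log 2 \<Lambda>"]
    by (simp_all add: J_def)
  have "\<Lambda> = 2 powr log 2 \<Lambda>" using assms by simp
  also have "\<dots> \<le> 2 ^ J"
    using J(1) by (simp add: powr_realpow[symmetric])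
  finally show ?thesis using J by blast
qed

lemma many_cycles_parameters:
  fixes \<Lambda> :: real and n h :: nat
  assumes h: "0 < h" and n: "2 \<le> n" and \<Lambda>: "1 \<le> \<Lambda>" "\<Lambda> \<le> real n ^ (h - 1)"
  shows "\<exists>J N. real J \<le> log 2 \<Lambda> + 1 \<and> \<Lambda> \<le> 2 ^ J \<and> real J + 1 \<le> 2 * real h * log 2 n \<and>
    0 < N \<and> real N \<le> 2 * real h * log 2 n \<and> n ^ h < 2 ^ N"
proof -
  have lg: "1 \<le> log 2 n" using n by (simp add: le_log_iff)
  have "log 2 \<Lambda> \<le> log 2 (real n ^ (h - 1))"
    using \<Lambda> n by (subst log_le_cancel_iff) auto
  then have log\<Lambda>: "log 2 \<Lambda> \<le> real (h - 1) * log 2 n"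
    by (simp add: log_nat_power)
  obtain J where J: "real J \<le> log 2 \<Lambda> + 1" "\<Lambda> \<le> 2 ^ J"
    using exists_dyadic_bound[OF \<Lambda>(1)] by blast
  have "real J + 1 \<le> real (h - 1) * log 2 n + 2"
    using J(1) log\<Lambda> by linarith
  also have "\<dots> \<le> 2 * real h * log 2 n"
  proof -
    have "(real h + 1) * 1 \<le> (real h + 1) * log 2 n"
      using lg by (intro mult_left_mono) auto
    then show ?thesis
      using h by (simp add: of_nat_diff algebra_simps)
  qed
  finally have "real J + 1 \<le> 2 * real h * log 2 n" .
  moreover obtain N where "0 < N" "real N \<le> 2 * real h * log 2 n" "n ^ h < 2 ^ N"
    using power_less_two_power_log[OF n, of h] h by auto
  ultimately show ?thesis
    using J by blast
qed

lemma threshold_tail_le: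
  assumes B: "1 \<le> B" and h: "0 < h"
  shows "threshold B (h - 1) \<le> B ^ ((h - 1)^2) * (2 / (1 / real h ^ h))"
proof -
  have two: "(2::real) ^ (h - 1) \<le> 2 * real h ^ h"
  proof (cases "h = 1")
    case False
    then have "2 \<le> h" using h by simp
    then have "(2::real) ^ (h - 1) \<le> real h ^ (h - 1)"
      by (intro power_mono) auto
    also have "\<dots> \<le> real h ^ h"
      using \<open>2 \<le> h\<close> by (intro power_increasing) auto
    finally have "(2::real) ^ (h - 1) \<le> real h ^ h" .
    moreover have "0 \<le> real h ^ h" by simp
    ultimately show ?thesis by linarith
  qed simp
  have "threshold B (h - 1) \<le> 2 ^ (h - 1) * B ^ ((h - 1) * (h - 1))"
    by (rule threshold_le[OF B])
  also have "\<dots> \<le> 2 * real h ^ h * B ^ ((h - 1) * (h - 1))"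
    using B by (intro mult_right_mono two) simp
  finally show ?thesis
    by (simp add: power2_eq_square mult_ac)
qed

lemma threshold_le_card_cycle_tails:
  fixes B \<Lambda> :: real
  assumes B: "1 \<le> B" and h: "0 < h" and \<Lambda>: "0 \<le> \<Lambda>"
    and t: "\<Lambda> * B ^ ((h - 1)^2) * (2 / (1 / real h ^ h)) \<le> real (t_count h n E v)"
  shows "threshold B (h - 1) * \<Lambda> \<le> card (cycle_tails h n E v)"
proof -
  have "threshold B (h - 1) * \<Lambda> \<le> B ^ ((h - 1)^2) * (2 / (1 / real h ^ h)) * \<Lambda>"
    using threshold_tail_le[OF B h] \<Lambda> by (rule mult_right_mono)
  also have "\<dots> \<le> real (t_count h n E v)"
    using t by (simp add: mult_ac)
  also have "\<dots> \<le> card (cycle_tails h n E v)"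
    using t_count_le_card_cycle_tails[OF h] by simp
  finally show ?thesis .
qed

lemma Product_of_exponents:
  fixes \<Lambda> :: real
  assumes h: "0 < h" and js: "js \<in> exponent_lists J (h - 1)" and J: "real J \<le> log 2 \<Lambda> + 1"
    and \<Lambda>: "1 \<le> \<Lambda>" "\<Lambda> \<le> 2 ^ sum_list js"
  shows "\<exists>P\<in>Product h \<Lambda>. keeps_from 1 js P \<and> P 0 = 1"
proof -
  define P where "P c = (if 0 < c \<and> c < h then (1 / 2) ^ (js ! (c - 1)) else 1 :: real)" for c
  have len: "length js = h - 1" and bound: "\<forall>j\<in>set js. j \<le> J"
    using js by (auto simp: exponent_lists_def)
  have dyadic: "\<exists>j::nat. real j \<le> log 2 \<Lambda> + 1 \<and> P c = (1 / 2) ^ j" if "c < h" for c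
  proof (cases "c = 0")
    case True
    then show ?thesis using \<Lambda>(1) by (intro exI[of _ 0]) (simp add: P_def)
  next
    case False
    then have "js ! (c - 1) \<in> set js" using that len by simp
    then have "real (js ! (c - 1)) \<le> log 2 \<Lambda> + 1" using bound J by force
    then show ?thesis using False that by (intro exI[of _ "js ! (c - 1)"]) (simp add: P_def)
  qed
  have "(\<Prod>c<h. P c) = (\<Prod>i<h - 1. P (Suc i))"
    using h prod.lessThan_Suc_shift[of P "h - 1"] by (simp add: P_def)
  also have "\<dots> = (\<Prod>i<length js. (1 / 2) ^ (js ! i))"
    using len by (intro prod.cong) (auto simp: P_def)
  also have "\<dots> = (1 / 2) ^ sum_list js"
    by (simp add: power_sum sum_list_sum_nth atLeast0LessThan)
  also have "\<dots> \<le> 1 / \<Lambda>"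
    using \<Lambda> by (simp add: power_one_over frac_le)
  finally have "P \<in> Product h \<Lambda>"
    using dyadic by (simp add: Product_def)
  moreover have "keeps_from 1 js P"
    using len by (auto simp: keeps_from_def P_def)
  ultimately show ?thesis
    by (auto simp: P_def)
qed

lemma found_cycle_tails_imp_discovered:
  assumes h: "0 < h" and w: "w v = (0, True)" and found: "found_from 1 (cycle_tails h n E v) w"
  shows "discovered h E (fst \<circ> w) {u\<in>{..<n}. snd (w u)} v"
proof -
  obtain f where f: "f \<in> cycle_tails h n E v" and wf: "\<forall>i<length f. w (f ! i) = (1 + i, True)"
    using found by (auto simp: found_from_def)
  let ?x = "\<lambda>i. (v # f) ! i"
  have len: "length f = h - 1" and x: "cyc_seq h E {..<n} ?x"
    using f by (auto simp: cycle_tails_def)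
  have wx: "w (?x i) = (i, True)" if "i < h" for i
  proof (cases i)
    case 0
    then show ?thesis using w by simp
  next
    case (Suc j)
    then have "j < length f" using that len by simp
    then show ?thesis using wf Suc by simp
  qed
  have "?x ` {..<h} \<subseteq> {u\<in>{..<n}. snd (w u)}"
  proof (rule image_subsetI)
    fix i assume "i \<in> {..<h}"
    then show "?x i \<in> {u\<in>{..<n}. snd (w u)}"
      using x wx[of i] by (auto simp: cyc_seq_def)
  qed
  then have "cyc_seq h E {u\<in>{..<n}. snd (w u)} ?x"
    using x unfolding cyc_seq_def by blast
  moreover have "v \<in> ?x ` {..<h}"
    using h by (intro image_eqI[of _ _ 0]) auto
  moreover have "inj_on (fst \<circ> w \<circ> ?x) {..<h}"
    by (rule inj_onI) (simp add: wx)
  ultimately show ?thesis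
    unfolding discovered_def by blast
qed

lemma disc_prob_ge_found_cycle_tails:
  assumes h: "0 < h" and P: "keep_probs h P" "P 0 = 1" and v: "v < n"
  shows "trial_prob h n P (found_from 1 (cycle_tails h n E v)) / h \<le> disc_prob h n E P v"
proof -
  let ?T = "cycle_tails h n E v"
  have "trial_prob h n P (found_from 1 ?T) / h = trial_prob h n P (\<lambda>w. w v = (0, True) \<and> found_from 1 ?T w)"
    using trial_prob_start[OF h P(1) h v, of ?T] cycle_tails_dlists[OF h] P(2)
    by (simp add: dlists_def)
  also have "\<dots> \<le> trial_prob h n P (\<lambda>w. discovered h E (fst \<circ> w) {u\<in>{..<n}. snd (w u)} v)"
    by (rule prod_prob_mono[OF prob_weights_keep_weight[OF h P(1)]])
      (use found_cycle_tails_imp_discovered[OF h] in blast)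
  also have "\<dots> = disc_prob h n E P v"
    by (rule disc_prob_eq_trial_prob[OF h, symmetric])
  finally show ?thesis .
qed

lemma disc_prob_ge_if_many_cycles:
  fixes \<Lambda> :: real
  assumes h: "2 \<le> h" and \<Lambda>: "1 \<le> \<Lambda>" and n: "2 \<le> n" and v: "v < n"
    and t: "\<Lambda> * (2 * real h * log 2 n) ^ ((h - 1)^2) * (2 / (1 / real h ^ h)) \<le> real (t_count h n E v)"
  shows "\<exists>P\<in>Product h \<Lambda>. (1 - 1 / exp 1) ^ (h - 1) * (1 / real h ^ h) \<le> disc_prob h n E P v"
proof -
  define B where "B = 2 * real h * log 2 n"
  define T where "T = cycle_tails h n E v"
  have "1 * 1 \<le> real h * log 2 n"
    using h n by (intro mult_mono) (auto simp: le_log_iff)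
  then have B: "1 \<le> B" by (simp add: B_def)
  have T: "T \<subseteq> dlists n (h - 1)"
    unfolding T_def using h by (intro cycle_tails_subset_dlists) simp
  have cardT: "threshold B (h - 1) * \<Lambda> \<le> card T"
    unfolding T_def using h \<Lambda> t by (intro threshold_le_card_cycle_tails[OF B]) (simp_all add: B_def)
  have "\<Lambda> \<le> threshold B (h - 1) * \<Lambda>"
    using one_le_threshold[OF B] \<Lambda> by simp
  also have "\<dots> \<le> real (card (dlists n (h - 1)))"
    using cardT card_mono[OF finite_dlists T] by linarith
  also have "\<dots> \<le> real n ^ (h - 1)"
    using card_dlists_le by (metis of_nat_le_iff of_nat_power)
  finally have "\<Lambda> \<le> real n ^ (h - 1)" .
  then obtain J N where J: "real J \<le> log 2 \<Lambda> + 1" "\<Lambda> \<le> 2 ^ J" "real J + 1 \<le> B"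
    and N: "0 < N" "real N \<le> B" "n ^ h < 2 ^ N"
    using many_cycles_parameters[of h n \<Lambda>] h n \<Lambda> unfolding B_def by auto
  have "\<exists>js\<in>exponent_lists J (h - 1). \<Lambda> \<le> 2 ^ sum_list js \<and>
      finds h n 1 js T (((1 - 1 / exp 1) / h) ^ (h - 1))"
    using h n \<Lambda> by (intro found_from_exponents[OF _ _ N J(3,2) T _ order_refl cardT]) auto
  then obtain js where js: "js \<in> exponent_lists J (h - 1)" "\<Lambda> \<le> 2 ^ sum_list js"
    and found: "finds h n 1 js T (((1 - 1 / exp 1) / h) ^ (h - 1))"
    by blast
  obtain P where P: "P \<in> Product h \<Lambda>" "keeps_from 1 js P" "P 0 = 1"
    using Product_of_exponents[OF _ js(1) J(1) \<Lambda> js(2)] h by auto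
  have "(1 - 1 / exp 1) ^ (h - 1) * (1 / real h ^ h) = ((1 - 1 / exp 1) / h) ^ (h - 1) / h"
    using h by (cases h) (simp_all add: power_divide)
  also have "\<dots> \<le> trial_prob h n P (found_from 1 T) / h"
    using found keep_probs_Product[OF P(1)] P(2) by (simp add: finds_def divide_right_mono)
  also have "\<dots> \<le> disc_prob h n E P v"
    unfolding T_def using h keep_probs_Product[OF P(1)] P(3) v
    by (intro disc_prob_ge_found_cycle_tails) simp_all
  finally show ?thesis
    using P(1) by blast
qed

theorem theorem7:
  fixes h :: nat and \<Lambda> :: "nat \<Rightarrow> real"
  assumes "h \<ge> 3" and "filterlim \<Lambda> at_top sequentially"
  shows "\<exists>N. \<forall>n\<ge>N. \<forall>E. simple_graph n E \<longrightarrow>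
     (let s = 1 / real h ^ h in
       (\<forall>v<n. real (t_count h n E v) \<ge> \<Lambda> n * (2 * real h * log 2 n) ^ ((h - 1)^2) * (2 / s)
            \<longrightarrow> (\<exists>P\<in>Product h (\<Lambda> n). disc_prob h n E P v \<ge> (1 - 1 / exp 1) ^ (h - 1) * s)) \<and>
       (\<forall>v<n. real (t_count h n E v) \<le> \<Lambda> n / log 2 n
            \<longrightarrow> (\<forall>P\<in>Product h (\<Lambda> n). disc_prob h n E P v \<le> 1 / log 2 n)))"
proof -
  obtain N where N: "\<And>n. N \<le> n \<Longrightarrow> 1 \<le> \<Lambda> n"
    using assms(2) unfolding filterlim_at_top eventually_sequentially by blast
  have "(\<forall>v<n. \<Lambda> n * (2 * real h * log 2 n) ^ ((h - 1)^2) * (2 / (1 / real h ^ h)) \<le> real (t_count h n E v)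
            \<longrightarrow> (\<exists>P\<in>Product h (\<Lambda> n). (1 - 1 / exp 1) ^ (h - 1) * (1 / real h ^ h) \<le> disc_prob h n E P v)) \<and>
        (\<forall>v<n. real (t_count h n E v) \<le> \<Lambda> n / log 2 n
            \<longrightarrow> (\<forall>P\<in>Product h (\<Lambda> n). disc_prob h n E P v \<le> 1 / log 2 n))"
    if n: "max N 2 \<le> n" for n E
  proof -
    have \<Lambda>: "1 \<le> \<Lambda> n" and "2 \<le> n" using N n by auto
    moreover have "2 \<le> h" using assms(1) by simp
    ultimately show ?thesis
      using disc_prob_ge_if_many_cycles[OF \<open>2 \<le> h\<close> \<Lambda> \<open>2 \<le> n\<close>]
        disc_prob_le_if_few_cycles[of h _ "\<Lambda> n" n E]
      by auto
  qed
  then show ?thesis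
    unfolding Let_def by blast
qed

end
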